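(* Let $T$ be a tree with exactly three pendant vertices $u_1,u_2,u_3$ and major vertex $m$, with $d(u_1,m)\equiv 0$, $d(u_2,m)\equiv 2$ and $d(u_3,m)\equiv 0\pmod 3$. Then there exists an eigenvector $x$ of $L(T)$ with eigenvalue $1$ such that for every $k\in\{1,2,3\}$ and every vertex $v$ on the path $P_{u_k,m}$ with $d(v,u_k)\equiv 1\pmod 3$, one has $x(v)=0$.
   Context: $L(T)=D(T)-A(T)$ is the Laplacian matrix of $T$. A pendant vertex has degree $1$; a major vertex has degree at least $3$. $P_{r,s}$ is the path in $T$ from $r$ to $s$, and $d$ denotes distance. *)

theory Defs
  imports Complex_Main "HOL-Library.FuncSet"
begin

definition simple_graph :: "'a set \<Rightarrow> ('a \<Rightarrow> 'a \<Rightarrow> bool) \<Rightarrow> bool" where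
  "simple_graph V E \<longleftrightarrow> finite V \<and> (\<forall>u v. E u v \<longrightarrow> u \<in> V \<and> v \<in> V)
     \<and> (\<forall>u v. E u v \<longrightarrow> E v u) \<and> (\<forall>v. \<not> E v v)"

definition is_walk :: "('a \<Rightarrow> 'a \<Rightarrow> bool) \<Rightarrow> 'a list \<Rightarrow> bool" where
  "is_walk E p \<longleftrightarrow> p \<noteq> [] \<and> (\<forall>i. Suc i < length p \<longrightarrow> E (p ! i) (p ! Suc i))"

definition walk_between :: "('a \<Rightarrow> 'a \<Rightarrow> bool) \<Rightarrow> 'a \<Rightarrow> 'a \<Rightarrow> 'a list \<Rightarrow> bool" where
  "walk_between E u v p \<longleftrightarrow> is_walk E p \<and> hd p = u \<and> last p = v"

definition path_between :: "('a \<Rightarrow> 'a \<Rightarrow> bool) \<Rightarrow> 'a \<Rightarrow> 'a \<Rightarrow> 'a list \<Rightarrow> bool" where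
  "path_between E u v p \<longleftrightarrow> walk_between E u v p \<and> distinct p"

definition connected_graph :: "'a set \<Rightarrow> ('a \<Rightarrow> 'a \<Rightarrow> bool) \<Rightarrow> bool" where
  "connected_graph V E \<longleftrightarrow> V \<noteq> {} \<and> (\<forall>u\<in>V. \<forall>v\<in>V. \<exists>p. walk_between E u v p)"

definition is_cycle :: "('a \<Rightarrow> 'a \<Rightarrow> bool) \<Rightarrow> 'a list \<Rightarrow> bool" where
  "is_cycle E c \<longleftrightarrow> length c \<ge> 3 \<and> distinct c \<and> is_walk E c \<and> E (last c) (hd c)"

definition acyclic_graph :: "('a \<Rightarrow> 'a \<Rightarrow> bool) \<Rightarrow> bool" where
  "acyclic_graph E \<longleftrightarrow> (\<nexists>c. is_cycle E c)"

definition is_tree :: "'a set \<Rightarrow> ('a \<Rightarrow> 'a \<Rightarrow> bool) \<Rightarrow> bool" where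
  "is_tree V E \<longleftrightarrow> simple_graph V E \<and> connected_graph V E \<and> acyclic_graph E"

definition degree :: "'a set \<Rightarrow> ('a \<Rightarrow> 'a \<Rightarrow> bool) \<Rightarrow> 'a \<Rightarrow> nat" where
  "degree V E v = card {w \<in> V. E v w}"

definition gdist :: "('a \<Rightarrow> 'a \<Rightarrow> bool) \<Rightarrow> 'a \<Rightarrow> 'a \<Rightarrow> nat" where
  "gdist E u v = (LEAST n. \<exists>p. walk_between E u v p \<and> length p = Suc n)"

definition laplacian :: "'a set \<Rightarrow> ('a \<Rightarrow> 'a \<Rightarrow> bool) \<Rightarrow> ('a \<Rightarrow> real) \<Rightarrow> 'a \<Rightarrow> real" where
  "laplacian V E x v = real (degree V E v) * x v - (\<Sum>w\<in>{w \<in> V. E v w}. x w)"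

definition laplacian_eigenvector :: "'a set \<Rightarrow> ('a \<Rightarrow> 'a \<Rightarrow> bool) \<Rightarrow> real \<Rightarrow> ('a \<Rightarrow> real) \<Rightarrow> bool" where
  "laplacian_eigenvector V E lam x \<longleftrightarrow> x \<in> extensional V \<and> (\<exists>v\<in>V. x v \<noteq> 0)
     \<and> (\<forall>v\<in>V. laplacian V E x v = lam * x v)"

end

(* The hypotheses force T to be a spider with centre m.  Every branch at a vertex c (a component
   of T - c) contains a leaf and different branches are disjoint, so deg c <= 3, and deg m = 3 with
   exactly one leaf in each branch at m.  For v <> m all leaves beyond v lie in the branch at m
   containing v, so v has at most one neighbour farther from m: deg v <= 2, and T is the union of
   the three legs P_{u_k,m}.  Along a leg, the equation L x = x at a vertex of degree 2 reads
   x(next) = x(v) - x(previous); as functions of the distance n to m its solutions satisfy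
   x(n + 3) = -x(n).  Take x(m) = 1, x = 1, 0, -1, -1, 0, 1, ... on P_{u2,m} and
   x = 1, 1, 0, -1, -1, 0, ... on the two other legs.  At m the equation reads 3 - (0 + 1 + 1) = 1;
   at a leaf u_k it demands that x vanish at the neighbour of u_k, which is what the congruences
   on d(u_k, m) give.  A vertex of P_{u_k,m} at distance 1 (mod 3) from u_k is at distance
   1 (mod 3) from m if k = 2 and 2 (mod 3) otherwise, and x vanishes there. *)

theory Submission
  imports Defs
begin

lemma successively_take: "successively P xs \<Longrightarrow> successively P (take n xs)"
  by (metis append_take_drop_id successively_append_iff)

lemma successively_drop: "successively P xs \<Longrightarrow> successively P (drop n xs)"
  by (metis append_take_drop_id successively_append_iff)

lemma is_walk_iff_successively: "is_walk E p \<longleftrightarrow> p \<noteq> [] \<and> successively E p"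
  by (simp add: is_walk_def successively_conv_nth)

lemma walk_between_iff:
  "walk_between E a b p \<longleftrightarrow> p \<noteq> [] \<and> successively E p \<and> hd p = a \<and> last p = b"
  by (auto simp: walk_between_def is_walk_iff_successively)

lemma walk_between_singleton: "walk_between E a a [a]"
  by (simp add: walk_between_iff)

lemma walk_between_edge: "E a b \<Longrightarrow> walk_between E a b [a, b]"
  by (simp add: walk_between_iff)

lemma walk_between_Cons_Cons:
  "walk_between E x b (x # y # r) \<longleftrightarrow> E x y \<and> walk_between E y b (y # r)"
  by (auto simp: walk_between_iff)

lemma walk_between_nth: "walk_between E a b p \<Longrightarrow> Suc i < length p \<Longrightarrow> E (p ! i) (p ! Suc i)"
  by (simp add: walk_between_iff successively_nth)

lemma walk_between_append:
  assumes "walk_between E a b p" "walk_between E b c q"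
  shows "walk_between E a c (p @ tl q)"
proof -
  obtain q' where q: "q = b # q'"
    using assms(2) by (cases q) (auto simp: walk_between_iff)
  show ?thesis
    using assms unfolding q by (cases q') (auto simp: walk_between_iff successively_append_iff)
qed

lemma walk_between_rev:
  assumes "\<And>x y. E x y \<Longrightarrow> E y x" "walk_between E a b p"
  shows "walk_between E b a (rev p)"
  using assms by (auto simp: walk_between_iff hd_rev last_rev elim: successively_mono)

lemma walk_between_take:
  assumes "walk_between E a b p" "i < length p"
  shows "walk_between E a (p ! i) (take (Suc i) p)"
proof -
  have "last (take (Suc i) p) = p ! i"
    using assms(2) by (simp add: take_Suc_conv_app_nth)
  moreover have "successively E (take (Suc i) p)" "hd (take (Suc i) p) = a"
    using assms(1) by (auto simp: walk_between_iff successively_take hd_take)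
  ultimately show ?thesis
    using assms by (simp add: walk_between_iff)
qed

lemma walk_between_drop:
  "walk_between E a b p \<Longrightarrow> i < length p \<Longrightarrow> walk_between E (p ! i) b (drop i p)"
  by (auto simp: walk_between_iff successively_drop hd_drop_conv_nth)

lemma walk_between_shorten_to_path:
  "walk_between E a b p \<Longrightarrow> \<exists>q. path_between E a b q \<and> set q \<subseteq> set p"
proof (induction "length p" arbitrary: p rule: less_induct)
  case less
  show ?case
  proof (cases "distinct p")
    case True
    then show ?thesis using less.prems by (auto simp: path_between_def)
  next
    case False
    then obtain xs ys zs y where p: "p = xs @ [y] @ ys @ [y] @ zs"
      using not_distinct_decomp by blast
    have "successively E (xs @ [y])" "successively E (y # zs)"
      using less.prems successively_append_iff[of E "xs @ [y]" "ys @ [y] @ zs"]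
        successively_append_iff[of E "xs @ [y] @ ys" "y # zs"]
      unfolding p walk_between_iff by auto
    then have "walk_between E a y (xs @ [y])" "walk_between E y b (y # zs)"
      using less.prems unfolding p by (auto simp: walk_between_iff hd_append)
    then have "walk_between E a b (xs @ [y] @ zs)"
      using walk_between_append by fastforce
    moreover have "length (xs @ [y] @ zs) < length p" unfolding p by simp
    ultimately obtain q where "path_between E a b q" "set q \<subseteq> set (xs @ [y] @ zs)"
      using less.hyps by blast
    then show ?thesis unfolding p by auto
  qed
qed

definition reach_avoiding :: "('a \<Rightarrow> 'a \<Rightarrow> bool) \<Rightarrow> 'a \<Rightarrow> 'a \<Rightarrow> 'a \<Rightarrow> bool" where
  "reach_avoiding E c a b \<longleftrightarrow> (\<exists>p. walk_between E a b p \<and> c \<notin> set p)"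

lemma reach_avoiding_refl: "a \<noteq> c \<Longrightarrow> reach_avoiding E c a a"
  unfolding reach_avoiding_def using walk_between_singleton by fastforce

lemma reach_avoiding_edge: "E a b \<Longrightarrow> a \<noteq> c \<Longrightarrow> b \<noteq> c \<Longrightarrow> reach_avoiding E c a b"
  unfolding reach_avoiding_def using walk_between_edge by fastforce

lemma reach_avoiding_sym:
  assumes "\<And>x y. E x y \<Longrightarrow> E y x" "reach_avoiding E c a b"
  shows "reach_avoiding E c b a"
proof -
  obtain p where p: "walk_between E a b p" "c \<notin> set p"
    using assms(2) unfolding reach_avoiding_def by blast
  have "walk_between E b a (rev p)"
    using walk_between_rev[OF assms(1) p(1)] .
  then show ?thesis
    unfolding reach_avoiding_def using p(2) by (intro exI[of _ "rev p"]) simp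
qed

lemma reach_avoiding_trans:
  assumes "reach_avoiding E c a b" "reach_avoiding E c b z"
  shows "reach_avoiding E c a z"
proof -
  obtain p q where "walk_between E a b p" "c \<notin> set p" "walk_between E b z q" "c \<notin> set q"
    using assms unfolding reach_avoiding_def by blast
  moreover have "set (tl q) \<subseteq> set q" by (cases q) auto
  ultimately have "walk_between E a z (p @ tl q)" "c \<notin> set (p @ tl q)"
    using walk_between_append by auto
  then show ?thesis
    unfolding reach_avoiding_def by blast
qed

lemma reach_avoiding_ne:
  assumes "reach_avoiding E c a b" shows "a \<noteq> c" "b \<noteq> c"
proof -
  obtain p where "walk_between E a b p" "c \<notin> set p"
    using assms unfolding reach_avoiding_def by blast
  then show "a \<noteq> c" "b \<noteq> c"
    by (auto simp: walk_between_iff)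
qed

lemma reach_avoiding_walk_vertex:
  assumes "walk_between E a b p" "c \<notin> set p" "z \<in> set p"
  shows "reach_avoiding E c a z"
proof -
  obtain i where i: "i < length p" "p ! i = z" using assms(3) by (metis in_set_conv_nth)
  have "c \<notin> set (take (Suc i) p)" using assms(2) by (meson in_set_takeD)
  then show ?thesis
    unfolding reach_avoiding_def using walk_between_take[OF assms(1) i(1)] i(2) by blast
qed

locale connected_simple_graph =
  fixes V :: "'a set" and E :: "'a \<Rightarrow> 'a \<Rightarrow> bool"
  assumes simple: "simple_graph V E" and connected: "connected_graph V E"
begin

abbreviation d :: "'a \<Rightarrow> 'a \<Rightarrow> nat" where "d \<equiv> gdist E"

abbreviation nbrs :: "'a \<Rightarrow> 'a set" where "nbrs v \<equiv> {w \<in> V. E v w}"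

lemma finite_vertices: "finite V"
  using simple by (simp add: simple_graph_def)

lemma edge_in_vertices: "E u v \<Longrightarrow> u \<in> V \<and> v \<in> V"
  using simple by (simp add: simple_graph_def)

lemma edge_sym: "E u v \<Longrightarrow> E v u"
  using simple by (simp add: simple_graph_def)

lemma edge_irrefl: "\<not> E v v"
  using simple by (simp add: simple_graph_def)

lemma reach_avoiding_commute: "reach_avoiding E c a b \<Longrightarrow> reach_avoiding E c b a"
  using reach_avoiding_sym[of E] edge_sym by blast

lemma finite_nbrs: "finite (nbrs v)"
  using finite_vertices by simp

lemma walk_between_vertices:
  assumes "walk_between E a b p" "a \<in> V"
  shows "set p \<subseteq> V"
proof
  fix x assume "x \<in> set p"
  then obtain i where "i < length p" "x = p ! i" by (metis in_set_conv_nth)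
  then show "x \<in> V"
    using assms walk_between_nth[OF assms(1), of "i - 1"] edge_in_vertices
    by (cases i) (auto simp: walk_between_iff hd_conv_nth)
qed

lemma shortest_walk_exists:
  assumes "a \<in> V" "b \<in> V"
  shows "\<exists>p. walk_between E a b p \<and> length p = Suc (d a b)"
proof -
  obtain p where "walk_between E a b p"
    using connected assms by (auto simp: connected_graph_def)
  then have "\<exists>n p. walk_between E a b p \<and> length p = Suc n"
    by (metis Suc_pred length_greater_0_conv walk_between_iff)
  then show ?thesis
    unfolding gdist_def by (rule LeastI_ex)
qed

lemma gdist_less_length:
  assumes "walk_between E a b p"
  shows "d a b < length p"
proof -
  have "length p = Suc (length p - 1)"
    using assms by (simp add: walk_between_iff)
  then have "d a b \<le> length p - 1"
    unfolding gdist_def using assms by (metis (mono_tags, lifting) Least_le)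
  then show ?thesis using \<open>length p = Suc (length p - 1)\<close> by linarith
qed

lemma gdist_self: "d a a = 0"
  using gdist_less_length[OF walk_between_singleton] by simp

lemma gdist_eq_0_iff: "a \<in> V \<Longrightarrow> b \<in> V \<Longrightarrow> d a b = 0 \<longleftrightarrow> a = b"
  using shortest_walk_exists gdist_self by (fastforce simp: walk_between_iff length_Suc_conv)

lemma gdist_sym:
  assumes "a \<in> V" "b \<in> V"
  shows "d a b = d b a"
proof -
  have "d b a \<le> d a b" if ab: "a \<in> V" "b \<in> V" for a b
  proof -
    obtain p where "walk_between E a b p" "length p = Suc (d a b)"
      using shortest_walk_exists[OF ab] by blast
    then show ?thesis
      using gdist_less_length[OF walk_between_rev[OF edge_sym]] by fastforce
  qed
  then show ?thesis using assms by (simp add: le_antisym)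
qed

lemma gdist_triangle:
  assumes "a \<in> V" "b \<in> V" "c \<in> V"
  shows "d a c \<le> d a b + d b c"
proof -
  obtain p q where p: "walk_between E a b p" "length p = Suc (d a b)"
    and q: "walk_between E b c q" "length q = Suc (d b c)"
    using shortest_walk_exists assms by metis
  have "d a c < length (p @ tl q)"
    using gdist_less_length walk_between_append[OF p(1) q(1)] by blast
  then show ?thesis using p q by simp
qed

lemma gdist_edge: "E a b \<Longrightarrow> d a b = 1"
  using gdist_less_length[OF walk_between_edge, of a b] gdist_eq_0_iff[of a b]
    edge_in_vertices edge_irrefl
  by fastforce

lemma closer_neighbor_exists:
  assumes "v \<in> V" "b \<in> V" "v \<noteq> b"
  shows "\<exists>w. E v w \<and> d w b + 1 = d v b"
proof -
  obtain p where p: "walk_between E v b p" "length p = Suc (d v b)"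
    using shortest_walk_exists assms by blast
  moreover have "d v b \<noteq> 0" using gdist_eq_0_iff assms by blast
  ultimately obtain y r where pr: "p = v # y # r"
    by (cases p; cases "tl p") (auto simp: walk_between_iff)
  then have y: "E v y" "walk_between E y b (y # r)"
    using p(1) by (auto simp: walk_between_Cons_Cons)
  have "d y b + 1 \<le> d v b"
    using gdist_less_length[OF y(2)] p(2) pr by simp
  moreover have "d v b \<le> d v y + d y b"
    using gdist_triangle edge_in_vertices y(1) assms by blast
  ultimately show ?thesis
    using gdist_edge y(1) by (intro exI[of _ y]) simp
qed

lemma reach_avoiding_if_not_farther:
  assumes "E v w" "b \<in> V" "d w b \<le> d v b"
  shows "reach_avoiding E v w b"
proof -
  obtain p where p: "walk_between E w b p" "length p = Suc (d w b)"
    using shortest_walk_exists edge_in_vertices assms by blast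
  have "v \<notin> set p"
  proof
    assume "v \<in> set p"
    then obtain j where j: "j < length p" "p ! j = v" by (metis in_set_conv_nth)
    have "p ! 0 = w" using p(1) by (auto simp: walk_between_iff hd_conv_nth)
    then have "j \<noteq> 0" using j(2) assms(1) edge_irrefl by (cases "j = 0") auto
    moreover have "d v b < length (drop j p)"
      using gdist_less_length[OF walk_between_drop[OF p(1) j(1)]] j(2) by simp
    ultimately show False using p(2) assms(3) by simp
  qed
  then show ?thesis using p(1) unfolding reach_avoiding_def by blast
qed

lemma length_le_card_nbrs:
  "set xs \<subseteq> nbrs v \<Longrightarrow> distinct xs \<Longrightarrow> length xs \<le> card (nbrs v)"
  by (metis card_mono finite_nbrs distinct_card)

end

locale tree = connected_simple_graph +
  assumes acyclic: "acyclic_graph E"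
begin

lemma neighbors_eq_if_reach_avoiding:
  assumes "E v a" "E v b" "reach_avoiding E v a b"
  shows "a = b"
proof (rule ccontr)
  assume "a \<noteq> b"
  obtain p where p: "walk_between E a b p" "v \<notin> set p"
    using assms(3) unfolding reach_avoiding_def by blast
  obtain q where q: "path_between E a b q" "set q \<subseteq> set p"
    using walk_between_shorten_to_path[OF p(1)] by blast
  then have "v \<notin> set q" "distinct q" "successively E q" "hd q = a" "last q = b" "q \<noteq> []"
    using p(2) by (auto simp: path_between_def walk_between_iff)
  moreover have "length q \<ge> 2"
    using calculation \<open>a \<noteq> b\<close> by (cases q; cases "tl q") auto
  ultimately have "is_cycle E (v # q)"
    using assms(1,2) edge_sym
    by (cases q) (auto simp: is_cycle_def is_walk_iff_successively)
  then show False using acyclic by (auto simp: acyclic_graph_def)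
qed

lemma closer_neighbor_unique:
  assumes "E v w" "E v w'" "b \<in> V" "d w b \<le> d v b" "d w' b \<le> d v b"
  shows "w = w'"
proof -
  have "reach_avoiding E v w b" "reach_avoiding E v w' b"
    using reach_avoiding_if_not_farther assms by blast+
  then have "reach_avoiding E v w w'"
    by (rule reach_avoiding_trans[OF _ reach_avoiding_commute])
  then show ?thesis
    using neighbors_eq_if_reach_avoiding assms by blast
qed

lemma gdist_neighbor_cases:
  assumes "E v w" "b \<in> V"
  shows "d w b = d v b + 1 \<or> d w b + 1 = d v b"
proof (cases "d w b \<le> d v b")
  case True
  have V: "v \<in> V" "w \<in> V" using edge_in_vertices assms(1) by auto
  have "v \<noteq> b"
    using True gdist_eq_0_iff V assms edge_irrefl by (metis le_zero_eq)
  then obtain w' where w': "E v w'" "d w' b + 1 = d v b"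
    using closer_neighbor_exists V assms by blast
  then have "w = w'"
    using closer_neighbor_unique[of v w w' b] True assms by simp
  then show ?thesis using w' by simp
next
  case False
  have "d w b \<le> d w v + d v b"
    using gdist_triangle edge_in_vertices assms by blast
  then show ?thesis
    using False gdist_edge[OF edge_sym[OF assms(1)]] by simp
qed

lemma path_between_gdist:
  "path_between E a b p \<Longrightarrow> a \<in> V \<Longrightarrow> d a b = length p - 1"
proof (induction p arbitrary: a rule: induct_list012)
  case (2 x)
  then show ?case by (auto simp: path_between_def walk_between_iff gdist_self)
next
  case (3 x y r)
  have xy: "E x y" "x = a" and py: "path_between E y b (y # r)" and x_new: "x \<notin> set (y # r)"
    using "3.prems"(1) by (auto simp: path_between_def walk_between_iff)
  have "y \<in> V" using xy edge_in_vertices by blast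
  moreover have "b \<in> set (y # r)"
    using py by (auto simp: path_between_def walk_between_iff)
  ultimately have V: "y \<in> V" "b \<in> V"
    using walk_between_vertices[of y b "y # r"] py by (auto simp: path_between_def)
  have dy: "d y b = length r" using "3.IH"(2)[OF py V(1)] by simp
  have "d x b + 1 \<noteq> d y b"
  proof
    assume x_closer: "d x b + 1 = d y b"
    then obtain z r' where r: "r = z # r'"
      using dy by (cases r) auto
    have z: "E y z" "path_between E z b r"
      using py unfolding r by (auto simp: path_between_def walk_between_iff)
    have "d z b + 1 = d y b"
      using "3.IH"(1)[OF z(2)] z(1) edge_in_vertices dy r by simp
    then have "x = z"
      using closer_neighbor_unique[OF edge_sym[OF xy(1)] z(1) V(2)] x_closer by simp
    then show False using x_new r by simp
  qed
  then show ?case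
    using gdist_neighbor_cases[OF edge_sym[OF xy(1)] V(2)] dy xy by simp
qed (simp add: path_between_def walk_between_iff)

lemma leaf_in_branch:
  assumes "E v w"
  shows "\<exists>l\<in>V. degree V E l = 1 \<and> reach_avoiding E v w l"
proof -
  define R where "R = {z \<in> V. reach_avoiding E v w z}"
  have V: "v \<in> V" "w \<in> V" using edge_in_vertices assms by auto
  have "w \<noteq> v" using assms edge_irrefl by blast
  then have "w \<in> R"
    unfolding R_def using V reach_avoiding_refl[of w v E] by blast
  moreover have "finite R" using finite_vertices R_def by simp
  ultimately have "Max ((\<lambda>z. d z v) ` R) \<in> (\<lambda>z. d z v) ` R"
    by (intro Max_in) auto
  then obtain l where l: "l \<in> R" "d l v = Max ((\<lambda>z. d z v) ` R)"
    by (metis (no_types, lifting) imageE)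
  have l_max: "d z v \<le> d l v" if "z \<in> R" for z
    unfolding l(2) using \<open>finite R\<close> that by (intro Max_ge) auto
  have lV: "l \<in> V" and "l \<noteq> v"
    using l R_def reach_avoiding_ne(2)[of E v w l] by auto
  then obtain l0 where l0: "E l l0" "d l0 v + 1 = d l v"
    using closer_neighbor_exists V by blast
  have "z = l0" if "E l z" for z
  proof (cases "d z v + 1 = d l v")
    case True
    then show ?thesis using closer_neighbor_unique[of l z l0 v] that l0 V by simp
  next
    case False
    then have farther: "d z v = d l v + 1"
      using gdist_neighbor_cases[OF that V(1)] by simp
    then have "z \<noteq> v" using gdist_self by force
    then have "reach_avoiding E v l z"
      using reach_avoiding_edge[of E l z v] that \<open>l \<noteq> v\<close> by blast
    then have "reach_avoiding E v w z"
      using reach_avoiding_trans[of E v w l z] l R_def by simp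
    then have "z \<in> R" using R_def edge_in_vertices that by blast
    then show ?thesis using l_max[of z] farther by simp
  qed
  then have "nbrs l = {l0}" using l0 edge_in_vertices by blast
  then have "degree V E l = 1" by (simp add: degree_def)
  then show ?thesis using lV l R_def by blast
qed

lemma path_between_gdist_nth:
  assumes "path_between E a b p" "a \<in> V" "i < length p"
  shows "d a (p ! i) = i" "d (p ! i) b = length p - 1 - i"
proof -
  have "path_between E a (p ! i) (take (Suc i) p)"
    using assms walk_between_take by (auto simp: path_between_def)
  then show "d a (p ! i) = i"
    using path_between_gdist assms by simp
  have "set p \<subseteq> V"
    using assms walk_between_vertices by (auto simp: path_between_def)
  then have "p ! i \<in> V" using assms(3) by auto
  moreover have "path_between E (p ! i) b (drop i p)"
    using assms walk_between_drop by (auto simp: path_between_def)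
  ultimately show "d (p ! i) b = length p - 1 - i"
    using path_between_gdist by simp
qed

end

(* The values of a solution of L x = x along a leg, indexed by the distance to the centre. *)
fun leg_seq :: "real \<Rightarrow> real \<Rightarrow> nat \<Rightarrow> real" where
  "leg_seq a b 0 = a"
| "leg_seq a b (Suc 0) = b"
| "leg_seq a b (Suc (Suc n)) = leg_seq a b (Suc n) - leg_seq a b n"

lemma leg_seq_add_3: "leg_seq a b (n + 3) = - leg_seq a b n"
  by (simp add: numeral_3_eq_3)

lemma leg_seq_add_mult_3: "leg_seq a b (n + 3 * k) = (-1) ^ k * leg_seq a b n"
proof (induction k)
  case (Suc k)
  have "n + 3 * Suc k = (n + 3 * k) + 3" by simp
  then show ?case using Suc by (simp only: leg_seq_add_3) simp
qed simp

lemma leg_seq_eq_0_mod_3: "leg_seq a b (n mod 3) = 0 \<Longrightarrow> leg_seq a b n = 0"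
  using leg_seq_add_mult_3[of a b "n mod 3" "n div 3"] by simp

lemma leg_seq_1_0_eq_0: "n mod 3 = 1 \<Longrightarrow> leg_seq 1 0 n = 0"
  by (rule leg_seq_eq_0_mod_3) simp

lemma leg_seq_1_1_eq_0: "n mod 3 = 2 \<Longrightarrow> leg_seq 1 1 n = 0"
  by (rule leg_seq_eq_0_mod_3) (simp add: numeral_2_eq_2)

lemma mod_3_diff_1: "(b::nat) + a = c \<Longrightarrow> b mod 3 = 1 \<Longrightarrow> a mod 3 = (c + 2) mod 3"
  by arith

locale three_leaf_tree = tree +
  fixes u1 u2 u3 m :: 'a
  assumes leaves_distinct: "distinct [u1, u2, u3]"
    and leaves: "{v \<in> V. degree V E v = 1} = {u1, u2, u3}"
    and center: "m \<in> V"
    and center_degree: "degree V E m \<ge> 3"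
begin

lemma leaf_iff: "u \<in> {u1, u2, u3} \<longleftrightarrow> u \<in> V \<and> degree V E u = 1"
  unfolding leaves[symmetric] by simp

definition branch_leaf :: "'a \<Rightarrow> 'a \<Rightarrow> 'a" where
  "branch_leaf c y = (SOME l. l \<in> V \<and> degree V E l = 1 \<and> reach_avoiding E c y l)"

lemma branch_leaf:
  assumes "E c y"
  shows "branch_leaf c y \<in> {u1, u2, u3}" "reach_avoiding E c y (branch_leaf c y)"
proof -
  have "\<exists>l. l \<in> V \<and> degree V E l = 1 \<and> reach_avoiding E c y l"
    using leaf_in_branch[OF assms] by blast
  then have "branch_leaf c y \<in> V \<and> degree V E (branch_leaf c y) = 1
      \<and> reach_avoiding E c y (branch_leaf c y)"
    unfolding branch_leaf_def by (rule someI_ex)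
  then show "branch_leaf c y \<in> {u1, u2, u3}" "reach_avoiding E c y (branch_leaf c y)"
    using leaf_iff by simp_all
qed

lemma inj_on_branch_leaf: "inj_on (branch_leaf c) (nbrs c)"
proof (rule inj_onI)
  fix y y' assume y: "y \<in> nbrs c" "y' \<in> nbrs c" and eq: "branch_leaf c y = branch_leaf c y'"
  have "reach_avoiding E c y (branch_leaf c y)"
    using branch_leaf(2) y by simp
  moreover have "reach_avoiding E c (branch_leaf c y) y'"
    using reach_avoiding_commute[OF branch_leaf(2)[of c y']] y eq by simp
  ultimately have "reach_avoiding E c y y'"
    by (rule reach_avoiding_trans)
  then show "y = y'" using neighbors_eq_if_reach_avoiding y by auto
qed

lemma card_nbrs_le_3: "card (nbrs c) \<le> 3"
proof -
  have "card (nbrs c) \<le> card {u1, u2, u3}"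
    using card_inj_on_le[OF inj_on_branch_leaf] branch_leaf(1) by blast
  then show ?thesis using leaves_distinct by simp
qed

lemma card_nbrs_center: "card (nbrs m) = 3"
  using card_nbrs_le_3[of m] center_degree by (simp add: degree_def)

lemma branch_leaf_center_bij: "bij_betw (branch_leaf m) (nbrs m) {u1, u2, u3}"
proof -
  have "branch_leaf m ` nbrs m = {u1, u2, u3}"
  proof (rule card_subset_eq)
    show "card (branch_leaf m ` nbrs m) = card {u1, u2, u3}"
      using card_image[OF inj_on_branch_leaf] card_nbrs_center leaves_distinct by simp
  qed (use branch_leaf(1) in auto)
  then show ?thesis using inj_on_branch_leaf by (simp add: bij_betw_def)
qed

lemma center_branch_unique_leaf:
  assumes "E m y" "l \<in> {u1, u2, u3}" "reach_avoiding E m y l"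
  shows "l = branch_leaf m y"
proof -
  obtain y' where y': "y' \<in> nbrs m" "l = branch_leaf m y'"
    using branch_leaf_center_bij assms(2) by (auto simp: bij_betw_def)
  then have "reach_avoiding E m l y'"
    using branch_leaf(2) reach_avoiding_commute by auto
  then have "reach_avoiding E m y y'"
    using reach_avoiding_trans[OF assms(3)] by blast
  then have "y = y'" using neighbors_eq_if_reach_avoiding assms(1) y' by auto
  then show ?thesis using y' by simp
qed

lemma card_nbrs_le_2:
  assumes "v \<in> V" "v \<noteq> m"
  shows "card (nbrs v) \<le> 2"
proof -
  obtain w0 where w0: "E v w0" "d w0 m + 1 = d v m"
    using closer_neighbor_exists assms center by blast
  obtain y where y: "E m y" "d y v + 1 = d m v"
    using closer_neighbor_exists assms center by metis
  have m_to_v: "reach_avoiding E m y v"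
    using reach_avoiding_if_not_farther[OF y(1) assms(1)] y(2) by simp
  have v_to_m: "reach_avoiding E v w0 m"
    using reach_avoiding_if_not_farther[OF w0(1) center] w0(2) by simp
  have same_leaf: "branch_leaf v w = branch_leaf m y" if w: "w \<in> nbrs v - {w0}" for w
  proof -
    obtain q where q: "walk_between E w (branch_leaf v w) q" "v \<notin> set q"
      using branch_leaf(2)[of v w] w unfolding reach_avoiding_def by auto
    have "m \<notin> set q"
    proof
      assume "m \<in> set q"
      then have "reach_avoiding E v w m"
        using reach_avoiding_walk_vertex[OF q] by blast
      then have "reach_avoiding E v w w0"
        using reach_avoiding_commute[OF v_to_m] by (rule reach_avoiding_trans)
      then show False using neighbors_eq_if_reach_avoiding w0(1) w by blast
    qed
    then have "reach_avoiding E m w (branch_leaf v w)"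
      using q(1) unfolding reach_avoiding_def by blast
    moreover have "reach_avoiding E m v w"
      using reach_avoiding_edge[of E v w m] w assms(2) reach_avoiding_ne(1)[OF calculation] by simp
    ultimately have "reach_avoiding E m y (branch_leaf v w)"
      using reach_avoiding_trans[OF m_to_v reach_avoiding_trans] by blast
    then show ?thesis
      using center_branch_unique_leaf[OF y(1)] branch_leaf(1)[of v w] w by simp
  qed
  have "card (nbrs v - {w0}) \<le> card {branch_leaf m y}"
  proof (rule card_inj_on_le)
    show "inj_on (branch_leaf v) (nbrs v - {w0})"
      using inj_on_branch_leaf by (rule inj_on_subset) blast
  qed (use same_leaf in auto)
  then show ?thesis
    using card_Diff_singleton_if[of "nbrs v" w0] finite_nbrs by (simp split: if_splits)
qed

definition on_u2_leg :: "'a \<Rightarrow> bool" where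
  "on_u2_leg v \<longleftrightarrow> d v u2 + d v m = d u2 m"

lemma leaf_vertices: "u1 \<in> V" "u2 \<in> V" "u3 \<in> V"
  and leaf_degree: "degree V E u1 = 1" "degree V E u2 = 1" "degree V E u3 = 1"
  using leaf_iff[of u1] leaf_iff[of u2] leaf_iff[of u3] by simp_all

lemma on_u2_leg_u2: "on_u2_leg u2"
  using gdist_self by (simp add: on_u2_leg_def)

lemma on_u2_leg_toward_center:
  assumes "E v w" "d w m = d v m + 1" "on_u2_leg w"
  shows "on_u2_leg v"
proof -
  have "v \<in> V" using edge_in_vertices assms(1) by blast
  then have "d u2 m \<le> d v u2 + d v m"
    using gdist_triangle[OF leaf_vertices(2) _ center] gdist_sym[OF leaf_vertices(2)] by simp
  moreover have "d v u2 \<le> d w u2 + 1"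
    using gdist_neighbor_cases[OF edge_sym[OF assms(1)] leaf_vertices(2)] by linarith
  ultimately show ?thesis using assms(2,3) by (simp add: on_u2_leg_def)
qed

lemma on_u2_leg_child_toward_u2:
  assumes "v \<in> V" "v \<noteq> m" "on_u2_leg v" "v \<noteq> u2"
  shows "\<exists>w. E v w \<and> d w m = d v m + 1 \<and> on_u2_leg w"
proof -
  obtain w0 where w0: "E v w0" "d w0 m + 1 = d v m"
    using closer_neighbor_exists assms center by blast
  obtain w where w: "E v w" "d w u2 + 1 = d v u2"
    using closer_neighbor_exists assms leaf_vertices(2) by blast
  have "d w0 u2 = d v u2 + 1"
    using on_u2_leg_toward_center[OF edge_sym[OF w0(1)]] w0(2) assms(3)
    by (simp add: on_u2_leg_def)
  then have "w \<noteq> w0" using w(2) by auto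
  then have "d w m = d v m + 1"
    using gdist_neighbor_cases[OF w(1) center] closer_neighbor_unique[OF w(1) w0(1) center] w0(2)
    by fastforce
  moreover have "on_u2_leg w"
    using calculation w(2) assms(3) by (simp add: on_u2_leg_def)
  ultimately show ?thesis using w(1) by blast
qed

lemma not_on_u2_leg_leaf:
  assumes "u \<in> V" "degree V E u = 1" "u \<noteq> u2"
  shows "\<not> on_u2_leg u"
proof
  assume leg: "on_u2_leg u"
  have "u \<noteq> m" using assms(2) center_degree by auto
  then obtain w0 w where "E u w0" "d w0 m + 1 = d u m" "E u w" "d w m = d u m + 1"
    using closer_neighbor_exists on_u2_leg_child_toward_u2 assms leg center by metis
  then have "length [w0, w] \<le> card (nbrs u)"
    using edge_in_vertices by (intro length_le_card_nbrs) auto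
  then show False using assms(2) by (simp add: degree_def)
qed

lemma on_u2_leg_child_iff:
  assumes "v \<in> V" "v \<noteq> m" "E v w" "d w m = d v m + 1"
  shows "on_u2_leg w \<longleftrightarrow> on_u2_leg v"
proof
  show "on_u2_leg w \<Longrightarrow> on_u2_leg v"
    using on_u2_leg_toward_center assms(3,4) by blast
next
  assume leg: "on_u2_leg v"
  obtain w0 where w0: "E v w0" "d w0 m + 1 = d v m"
    using closer_neighbor_exists assms center by blast
  have "length [w0, w] \<le> card (nbrs v)"
    using w0 assms edge_in_vertices by (intro length_le_card_nbrs) auto
  then have "v \<noteq> u2" using leaf_degree(2) by (auto simp: degree_def)
  then obtain w' where w': "E v w'" "d w' m = d v m + 1" "on_u2_leg w'"
    using on_u2_leg_child_toward_u2 assms(1,2) leg by blast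
  show "on_u2_leg w"
  proof (rule ccontr)
    assume "\<not> on_u2_leg w"
    then have "length [w0, w, w'] \<le> card (nbrs v)"
      using w0 w' assms edge_in_vertices by (intro length_le_card_nbrs) auto
    then show False using card_nbrs_le_2[OF assms(1,2)] by simp
  qed
qed

lemma on_u2_leg_path_descend:
  assumes p: "path_between E u m p" "u \<in> V"
  shows "i < length p \<Longrightarrow> on_u2_leg (p ! i) \<Longrightarrow> p ! i \<noteq> m \<Longrightarrow> on_u2_leg u"
proof (induction i)
  case 0
  then show ?case using p by (auto simp: path_between_def walk_between_iff hd_conv_nth)
next
  case (Suc j)
  have "set p \<subseteq> V"
    using p walk_between_vertices by (auto simp: path_between_def)
  then have "p ! Suc j \<in> V" using Suc.prems(1) by auto
  moreover have "E (p ! j) (p ! Suc j)"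
    using p Suc.prems(1) walk_between_nth by (auto simp: path_between_def)
  moreover have "d (p ! j) m = d (p ! Suc j) m + 1"
    using path_between_gdist_nth(2)[OF p] Suc.prems(1) by simp
  ultimately have "on_u2_leg (p ! j)"
    using on_u2_leg_child_iff[OF _ Suc.prems(3)] edge_sym Suc.prems(2) by blast
  moreover have "p ! j \<noteq> m"
    using \<open>d (p ! j) m = d (p ! Suc j) m + 1\<close> gdist_self by auto
  ultimately show ?case using Suc.IH Suc.prems(1) by simp
qed

(* Outside V the value must be undefined for the vector to lie in extensional V. *)
definition eigvec :: "'a \<Rightarrow> real" where
  "eigvec v = (if v \<in> V then leg_seq 1 (if on_u2_leg v then 0 else 1) (d v m) else undefined)"

lemma eigvec_center: "eigvec m = 1"
  using center gdist_self by (simp add: eigvec_def)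

lemma laplacian_eigvec_center: "laplacian V E eigvec m = eigvec m"
proof -
  obtain w2 where w2: "E m w2" "d w2 u2 + 1 = d m u2"
    using closer_neighbor_exists center leaf_vertices(2) center_degree leaf_degree(2) by force
  have w2_nbr: "w2 \<in> nbrs m" using w2 edge_in_vertices by blast
  have eigvec_nbr: "eigvec w = (if w = w2 then 0 else 1)" if "w \<in> nbrs m" for w
  proof -
    have dw: "d w m = 1" using gdist_edge edge_sym that by blast
    have "on_u2_leg w \<longleftrightarrow> w = w2"
    proof
      assume "on_u2_leg w"
      then have "d w u2 + 1 = d m u2"
        using dw gdist_sym[OF center leaf_vertices(2)] by (simp add: on_u2_leg_def)
      then show "w = w2"
        using closer_neighbor_unique[of m w w2 u2] that w2 leaf_vertices(2) by simp
    next
      assume "w = w2"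
      then show "on_u2_leg w"
        using dw w2(2) gdist_sym[OF center leaf_vertices(2)] by (simp add: on_u2_leg_def)
    qed
    then show ?thesis using dw that by (simp add: eigvec_def)
  qed
  have "sum eigvec (nbrs m) = eigvec w2 + sum eigvec (nbrs m - {w2})"
    using sum.remove[OF finite_nbrs w2_nbr] by simp
  also have "\<dots> = real (card (nbrs m - {w2}))"
    using eigvec_nbr w2_nbr by simp
  also have "\<dots> = 2"
    using card_nbrs_center w2_nbr finite_nbrs by (simp add: card_Diff_singleton)
  finally show ?thesis
    using eigvec_center card_nbrs_center by (simp add: laplacian_def degree_def)
qed

lemma laplacian_eigvec_non_center:
  assumes v: "v \<in> V" "v \<noteq> m"
    and "degree V E v = 1 \<Longrightarrow> leg_seq 1 (if on_u2_leg v then 0 else 1) (d v m - 1) = 0"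
  shows "laplacian V E eigvec v = eigvec v"
proof -
  define s where "s = leg_seq 1 (if on_u2_leg v then 0 else 1)"
  define r where "r = d v m"
  obtain w0 where w0: "E v w0" "d w0 m + 1 = r"
    using closer_neighbor_exists v center r_def by blast
  define C where "C = nbrs v - {w0}"
  have w0_nbr: "w0 \<in> nbrs v" using w0 edge_in_vertices by blast
  have card_C: "card (nbrs v) = card C + 1"
    using card_Diff_singleton[OF w0_nbr] finite_nbrs w0_nbr C_def
    by (metis Suc_eq_plus1 card_Suc_Diff1)
  have eigvec_v: "eigvec v = s r"
    using v by (simp add: eigvec_def s_def r_def)
  have eigvec_child: "eigvec c = s (r + 1)" if "c \<in> C" for c
  proof -
    have c: "E v c" "c \<noteq> w0" using that C_def by auto
    then have "d c m = r + 1"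
      using gdist_neighbor_cases[OF c(1) center] closer_neighbor_unique[OF c(1) w0(1) center] w0(2)
        r_def by fastforce
    then show ?thesis
      using on_u2_leg_child_iff[OF v c(1)] edge_in_vertices c(1) r_def
      by (simp add: eigvec_def s_def)
  qed
  have eigvec_parent: "eigvec w0 = s (r - 1)"
  proof (cases "w0 = m")
    case True
    then show ?thesis using w0(2) eigvec_center gdist_self by (simp add: s_def)
  next
    case False
    have "w0 \<in> V" using w0_nbr by blast
    then have "on_u2_leg v \<longleftrightarrow> on_u2_leg w0"
      using on_u2_leg_child_iff[OF _ False edge_sym[OF w0(1)]] w0(2) r_def by simp
    moreover have "d w0 m = r - 1" using w0(2) by simp
    ultimately show ?thesis
      using \<open>w0 \<in> V\<close> by (simp add: eigvec_def s_def)
  qed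
  have "sum eigvec (nbrs v) = eigvec w0 + sum eigvec C"
    using sum.remove[OF finite_nbrs w0_nbr] C_def by simp
  also have "\<dots> = s (r - 1) + real (card C) * s (r + 1)"
    using eigvec_parent eigvec_child by simp
  finally have sum_nbrs: "sum eigvec (nbrs v) = s (r - 1) + real (card C) * s (r + 1)" .
  have "card C \<le> 1" using card_C card_nbrs_le_2[OF v] by simp
  then consider (inner) "card C = 1" | (leaf) "card C = 0" by linarith
  then show ?thesis
  proof cases
    case inner
    have "s (r + 1) = s r - s (r - 1)"
      using w0(2) leg_seq.simps(3)[of 1 _ "r - 1"] by (simp add: s_def Suc_diff_Suc)
    then show ?thesis
      using sum_nbrs card_C inner eigvec_v by (simp add: laplacian_def degree_def)
  next
    case leaf
    then have "s (r - 1) = 0"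
      using assms(3) card_C by (simp add: s_def r_def degree_def)
    then show ?thesis
      using sum_nbrs card_C leaf eigvec_v by (simp add: laplacian_def degree_def)
  qed
qed

end

locale three_leaf_tree_mod_3 = three_leaf_tree +
  assumes u1_mod_3: "gdist E u1 m mod 3 = 0"
    and u2_mod_3: "gdist E u2 m mod 3 = 2"
    and u3_mod_3: "gdist E u3 m mod 3 = 0"
begin

lemma leg_seq_before_leaf:
  assumes "u \<in> V" "degree V E u = 1"
  shows "leg_seq 1 (if on_u2_leg u then 0 else 1) (d u m - 1) = 0"
proof -
  have "u \<in> {u1, u2, u3}" using assms leaf_iff by simp
  have "u \<noteq> m" using assms(2) center_degree by auto
  then obtain k where k: "d u m = Suc k"
    using gdist_eq_0_iff assms(1) center not0_implies_Suc by blast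
  show ?thesis
  proof (cases "u = u2")
    case True
    then have "Suc k mod 3 = 2" using k u2_mod_3 by simp
    then have "k mod 3 = 1" by (simp add: mod_Suc split: if_splits)
    then show ?thesis using True k on_u2_leg_u2 leg_seq_1_0_eq_0 by simp
  next
    case False
    then have "Suc k mod 3 = 0" using \<open>u \<in> {u1, u2, u3}\<close> k u1_mod_3 u3_mod_3 by auto
    then have "k mod 3 = 2" by (simp add: mod_Suc split: if_splits)
    then show ?thesis using False k not_on_u2_leg_leaf assms leg_seq_1_1_eq_0 by simp
  qed
qed

lemma laplacian_eigenvector_eigvec: "laplacian_eigenvector V E 1 eigvec"
  unfolding laplacian_eigenvector_def
proof (intro conjI)
  show "eigvec \<in> extensional V" by (simp add: extensional_def eigvec_def)
  show "\<exists>v\<in>V. eigvec v \<noteq> 0" using center eigvec_center by (intro bexI[of _ m]) simp_all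
  show "\<forall>v\<in>V. laplacian V E eigvec v = 1 * eigvec v"
    using laplacian_eigvec_center laplacian_eigvec_non_center leg_seq_before_leaf by auto
qed

lemma eigvec_eq_0_on_leg:
  assumes "u \<in> {u1, u2, u3}" "path_between E u m p" "v \<in> set p" "d v u mod 3 = 1"
  shows "eigvec v = 0"
proof -
  have u: "u \<in> V" "degree V E u = 1" using assms(1) leaf_iff by simp_all
  obtain i where i: "i < length p" "v = p ! i" using assms(3) by (metis in_set_conv_nth)
  have "v \<in> V" using walk_between_vertices assms(2,3) u by (auto simp: path_between_def)
  have "d u v + d v m = d u m"
    using path_between_gdist_nth[OF assms(2) u(1) i(1)] path_between_gdist[OF assms(2) u(1)] i
    by simp
  then have on_path: "d v u + d v m = d u m"
    using gdist_sym[OF u(1) \<open>v \<in> V\<close>] by simp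
  have v_mod_3: "d v m mod 3 = (d u m + 2) mod 3"
    using mod_3_diff_1[OF on_path assms(4)] .
  show ?thesis
  proof (cases "u = u2")
    case True
    then have "d v m mod 3 = 1" using u2_mod_3 v_mod_3 by (simp add: mod_Suc)
    moreover have "on_u2_leg v" using on_path True by (simp add: on_u2_leg_def)
    ultimately show ?thesis using \<open>v \<in> V\<close> leg_seq_1_0_eq_0 by (simp add: eigvec_def)
  next
    case False
    then have "d u m mod 3 = 0" using assms(1) u1_mod_3 u3_mod_3 by auto
    then have "d v m mod 3 = 2" using v_mod_3 by (simp add: mod_Suc)
    moreover have "\<not> on_u2_leg v"
    proof
      assume "on_u2_leg v"
      moreover have "v \<noteq> m"
        using assms(4) \<open>d u m mod 3 = 0\<close> gdist_sym[OF u(1) center] by auto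
      ultimately have "on_u2_leg u"
        using on_u2_leg_path_descend[OF assms(2) u(1) i(1)] i(2) by simp
      then show False using not_on_u2_leg_leaf u False by blast
    qed
    ultimately show ?thesis using \<open>v \<in> V\<close> leg_seq_1_1_eq_0 by (simp add: eigvec_def)
  qed
qed

end

theorem mainTheorem8:
  fixes V :: "'a set" and E :: "'a \<Rightarrow> 'a \<Rightarrow> bool" and u1 u2 u3 m :: 'a
  assumes "is_tree V E"
    and "distinct [u1, u2, u3]"
    and "{v \<in> V. degree V E v = 1} = {u1, u2, u3}"
    and "m \<in> V" and "degree V E m \<ge> 3"
    and "gdist E u1 m mod 3 = 0"
    and "gdist E u2 m mod 3 = 2"
    and "gdist E u3 m mod 3 = 0"
  shows "\<exists>x. laplacian_eigenvector V E 1 x \<and>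
     (\<forall>u \<in> {u1, u2, u3}. \<forall>p v. path_between E u m p \<and> v \<in> set p \<and> gdist E v u mod 3 = 1
        \<longrightarrow> x v = 0)"
proof -
  interpret three_leaf_tree_mod_3 V E u1 u2 u3 m
    using assms by unfold_locales (auto simp: is_tree_def)
  show ?thesis
    using laplacian_eigenvector_eigvec eigvec_eq_0_on_leg by blast
qed

end
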